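(* The maximal absolute projection constant in dimension $5$ satisfies $$\lambda(5)\ \ge\ \lambda(5,16)\ \ge\ \frac{5}{59}\left(11+6\sqrt5\right)\approx 2.06919.$$
   Context: For a real Banach space $X$ and finite-dimensional subspace $Y$, $\lambda(Y,X)=\inf\{\|P\|\}$ over bounded linear projections $P:X\to Y$ (i.e. $P|_Y=\mathrm{Id}_Y$). The absolute projection constant is $\lambda(Y)=\sup\{\lambda(Y,X): Y\subset X\}$ over all real Banach superspaces $X$, and $\lambda(m)=\sup\{\lambda(Y):\dim Y=m\}$. For integers $n\ge m$, $\lambda(m,n):=\sup\{\lambda(Y,\ell_\infty^{(n)}): Y\subset\ell_\infty^{(n)},\ \dim Y=m\}$, where $\ell_\infty^{(n)}$ is $\mathbb{R}^n$ with the max norm. *)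

theory Defs
  imports "HOL-Analysis.Analysis" "HOL-Library.Function_Algebras"
begin

(* Pointwise real vector space structure on functions (needed only to have a
   universe type (real => real) large enough to contain copies of all the
   Banach superspaces relevant for the absolute projection constant). *)
instantiation "fun" :: (type, real_vector) real_vector
begin
definition scaleR_fun :: "real \<Rightarrow> ('a \<Rightarrow> 'b) \<Rightarrow> 'a \<Rightarrow> 'b"
  where "scaleR_fun c f = (\<lambda>x. c *\<^sub>R f x)"
instance
  by standard (auto simp: scaleR_fun_def fun_eq_iff scaleR_add_right scaleR_add_left)
end

definition is_norm_on :: "('a::real_vector \<Rightarrow> real) \<Rightarrow> 'a set \<Rightarrow> bool" where
  "is_norm_on N X \<longleftrightarrow> subspace X \<and>
     (\<forall>x\<in>X. 0 \<le> N x) \<and> (\<forall>x\<in>X. N x = 0 \<longleftrightarrow> x = 0) \<and>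
     (\<forall>x\<in>X. \<forall>c. N (c *\<^sub>R x) = \<bar>c\<bar> * N x) \<and>
     (\<forall>x\<in>X. \<forall>y\<in>X. N (x + y) \<le> N x + N y)"

definition is_banach_on :: "('a::real_vector \<Rightarrow> real) \<Rightarrow> 'a set \<Rightarrow> bool" where
  "is_banach_on N X \<longleftrightarrow> is_norm_on N X \<and>
     (\<forall>s::nat \<Rightarrow> 'a. (\<forall>n. s n \<in> X) \<longrightarrow>
        (\<forall>e>0. \<exists>M. \<forall>m\<ge>M. \<forall>n\<ge>M. N (s m - s n) < e) \<longrightarrow>
        (\<exists>l\<in>X. \<forall>e>0. \<exists>M. \<forall>n\<ge>M. N (s n - l) < e))"

definition is_bounded_proj :: "('a::real_vector \<Rightarrow> real) \<Rightarrow> 'a set \<Rightarrow> 'a set \<Rightarrow> ('a \<Rightarrow> 'a) \<Rightarrow> bool" where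
  "is_bounded_proj N X Y P \<longleftrightarrow>
     (\<forall>x\<in>X. \<forall>y\<in>X. P (x + y) = P x + P y) \<and>
     (\<forall>x\<in>X. \<forall>c. P (c *\<^sub>R x) = c *\<^sub>R P x) \<and>
     P ` X \<subseteq> Y \<and> (\<forall>y\<in>Y. P y = y) \<and>
     (\<exists>K. \<forall>x\<in>X. N (P x) \<le> K * N x)"

definition op_norm_on :: "('a::real_vector \<Rightarrow> real) \<Rightarrow> 'a set \<Rightarrow> ('a \<Rightarrow> 'a) \<Rightarrow> real" where
  "op_norm_on N X P = Sup {N (P x) | x. x \<in> X \<and> N x \<le> 1}"

definition rel_proj_const :: "('a::real_vector \<Rightarrow> real) \<Rightarrow> 'a set \<Rightarrow> 'a set \<Rightarrow> real" where
  "rel_proj_const N X Y = Inf {op_norm_on N X P | P. is_bounded_proj N X Y P}"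

(* lambda(m): supremum of lambda(Y, X) over all m-dimensional Y contained in a
   real Banach space X; the Banach spaces are realised as linear subspaces of
   the universe (real => real) carrying an arbitrary complete norm. *)
definition lambda_abs :: "nat \<Rightarrow> real" where
  "lambda_abs m = Sup {rel_proj_const N X Y | N X (Y :: (real \<Rightarrow> real) set).
       is_banach_on N X \<and> subspace Y \<and> Y \<subseteq> X \<and> dim Y = m}"

(* l_infinity^(n): R^n realised as functions nat => real vanishing from index n on,
   with the max norm *)
definition linf_space :: "nat \<Rightarrow> (nat \<Rightarrow> real) set" where
  "linf_space n = {x. \<forall>i\<ge>n. x i = 0}"

definition linf_norm :: "nat \<Rightarrow> (nat \<Rightarrow> real) \<Rightarrow> real" where
  "linf_norm n x = Max (insert 0 {\<bar>x i\<bar> | i. i < n})"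

definition lambda_mn :: "nat \<Rightarrow> nat \<Rightarrow> real" where
  "lambda_mn m n = Sup {rel_proj_const (linf_norm n) (linf_space n) Y | Y.
       subspace Y \<and> Y \<subseteq> linf_space n \<and> dim Y = m}"

end

theory Submission
  imports Defs
begin

text \<open>
  The witness subspace \<open>Y\<^sub>5\<close> of \<open>\<ell>\<^sub>\<infinity>\<^sup>1\<^sup>6\<close> is a five-dimensional eigenspace of the matrix
  \<open>(S\<^sub>i\<^sub>j w\<^sub>j)\<close>, where \<open>S\<close> is a symmetric sign matrix and \<open>w\<close> a positive weight, for the eigenvalue
  \<open>\<mu> = 20 + 10\<surd>5\<close>.  Test a projection \<open>P\<close> onto \<open>Y\<^sub>5\<close> on the rows \<open>s\<^sub>i\<close> of \<open>S\<close>, which have norm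
  at most \<open>1\<close>: on the one hand \<open>\<Sum>\<^sub>i w\<^sub>i (P s\<^sub>i)\<^sub>i \<le> \<parallel>P\<parallel> \<Sum>\<^sub>i w\<^sub>i\<close>; on the other hand, expanding
  \<open>s\<^sub>i\<close> in unit vectors and using the symmetry of \<open>S\<close> and that every \<open>P e\<^sub>j\<close> lies in the
  eigenspace, the left-hand side equals \<open>\<mu>\<close> times the trace of \<open>P\<close>, which is \<open>dim Y\<^sub>5 = 5\<close>.
  Hence \<open>\<parallel>P\<parallel> \<ge> 5 \<mu> / \<Sum>\<^sub>i w\<^sub>i = 5 (20 + 10\<surd>5) / (80 + 10\<surd>5) = 5 (11 + 6\<surd>5) / 59\<close>.

  The comparison \<open>\<lambda>(5, 16) \<le> \<lambda>(5)\<close> only needs \<open>\<ell>\<^sub>\<infinity>\<^sup>1\<^sup>6\<close> to be a Banach space that embeds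
  linearly and isometrically into the universe of \<open>\<lambda>(5)\<close>, and the suprema to be finite: by
  Hahn--Banach, splitting off one direction at a time with a norming functional, every
  \<open>m\<close>-dimensional subspace of a normed space is the range of a projection of norm at most
  \<open>2\<^sup>m - 1\<close>.
\<close>

section \<open>Hahn--Banach for sublinear functionals\<close>

definition linear_on :: "'a::real_vector set \<Rightarrow> ('a \<Rightarrow> 'b::real_vector) \<Rightarrow> bool" where
  "linear_on X f \<longleftrightarrow>
     (\<forall>x\<in>X. \<forall>y\<in>X. f (x + y) = f x + f y) \<and> (\<forall>x\<in>X. \<forall>c. f (c *\<^sub>R x) = c *\<^sub>R f x)"

definition sublinear_on :: "('a::real_vector \<Rightarrow> real) \<Rightarrow> 'a set \<Rightarrow> bool" where
  "sublinear_on p X \<longleftrightarrow> subspace X \<and>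
     (\<forall>x\<in>X. \<forall>y\<in>X. p (x + y) \<le> p x + p y) \<and> (\<forall>x\<in>X. \<forall>c\<ge>0. p (c *\<^sub>R x) = c * p x)"

text \<open>A linear subspace of \<open>X \<times> \<real>\<close> lying below the graph of \<open>p\<close>; when \<open>p 0 = 0\<close> it is
  the graph of a linear functional dominated by \<open>p\<close> on its domain.\<close>
definition dominated_linear_graph :: "('a::real_vector \<Rightarrow> real) \<Rightarrow> 'a set \<Rightarrow> ('a \<times> real) set \<Rightarrow> bool" where
  "dominated_linear_graph p X G \<longleftrightarrow> G \<subseteq> X \<times> UNIV \<and> (0, 0) \<in> G \<and>
     (\<forall>x a y b. (x, a) \<in> G \<longrightarrow> (y, b) \<in> G \<longrightarrow> (x + y, a + b) \<in> G) \<and>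
     (\<forall>x a r. (x, a) \<in> G \<longrightarrow> (r *\<^sub>R x, r * a) \<in> G) \<and>
     (\<forall>x a. (x, a) \<in> G \<longrightarrow> a \<le> p x)"

lemma sublinear_on_zero:
  assumes "sublinear_on p X"
  shows "p 0 = 0"
  using assms subspace_0[of X] unfolding sublinear_on_def by (metis mult_zero_left order_refl scale_zero_left)

lemma sublinear_on_neg:
  assumes "sublinear_on p X" "x \<in> X"
  shows "- p x \<le> p (- x)"
proof -
  have "p (x + - x) \<le> p x + p (- x)"
    using assms subspace_neg[of X x] unfolding sublinear_on_def by blast
  then show ?thesis using sublinear_on_zero[OF assms(1)] by simp
qed

lemma dominated_linear_graphD:
  assumes "dominated_linear_graph p X G"
  shows "G \<subseteq> X \<times> UNIV" "(0, 0) \<in> G"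
    "\<And>x a y b. (x, a) \<in> G \<Longrightarrow> (y, b) \<in> G \<Longrightarrow> (x + y, a + b) \<in> G"
    "\<And>x a r. (x, a) \<in> G \<Longrightarrow> (r *\<^sub>R x, r * a) \<in> G"
    "\<And>x a. (x, a) \<in> G \<Longrightarrow> a \<le> p x"
  using assms unfolding dominated_linear_graph_def by auto

lemma dominated_linear_graph_unique:
  assumes G: "dominated_linear_graph p X G" and "p 0 = 0" and "(x, a) \<in> G" "(x, b) \<in> G"
  shows "a = b"
proof -
  have "(x + (-1) *\<^sub>R x, a + (-1) * b) \<in> G" "(x + (-1) *\<^sub>R x, b + (-1) * a) \<in> G"
    using dominated_linear_graphD(3,4)[OF G] assms(3,4) by blast+
  then have "a - b \<le> p 0" "b - a \<le> p 0"
    using dominated_linear_graphD(5)[OF G] by fastforce+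
  then show ?thesis using \<open>p 0 = 0\<close> by simp
qed

lemma dominated_linear_graph_Union:
  assumes "C \<noteq> {}" and dom: "\<And>G. G \<in> C \<Longrightarrow> dominated_linear_graph p X G"
    and chain: "\<And>G H. G \<in> C \<Longrightarrow> H \<in> C \<Longrightarrow> G \<subseteq> H \<or> H \<subseteq> G"
  shows "dominated_linear_graph p X (\<Union>C)"
proof -
  have add: "(x + y, a + b) \<in> \<Union>C" if xy: "(x, a) \<in> \<Union>C" "(y, b) \<in> \<Union>C" for x a y b
  proof -
    obtain G H where G: "G \<in> C" "(x, a) \<in> G" and H: "H \<in> C" "(y, b) \<in> H"
      using xy by blast
    show ?thesis
    proof (cases "G \<subseteq> H")
      case True
      then show ?thesis using dominated_linear_graphD(3)[OF dom[OF H(1)]] G H by blast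
    next
      case False
      then have "H \<subseteq> G" using chain[OF G(1) H(1)] by blast
      then show ?thesis using dominated_linear_graphD(3)[OF dom[OF G(1)]] G H by blast
    qed
  qed
  show ?thesis
    unfolding dominated_linear_graph_def
  proof (intro conjI allI impI add)
    show "\<Union>C \<subseteq> X \<times> UNIV" using dominated_linear_graphD(1)[OF dom] by blast
    show "(0, 0) \<in> \<Union>C" using assms(1) dominated_linear_graphD(2)[OF dom] by blast
  next
    fix x a r
    assume "(x, a) \<in> \<Union>C"
    then show "(r *\<^sub>R x, r * a) \<in> \<Union>C" using dominated_linear_graphD(4)[OF dom] by blast
  next
    fix x a
    assume "(x, a) \<in> \<Union>C"
    then show "a \<le> p x" using dominated_linear_graphD(5)[OF dom] by blast
  qed
qed

text \<open>The one-dimensional step of Hahn--Banach: a value \<open>c\<close> for the new direction \<open>x\<^sub>0\<close>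
  exists because \<open>a - p (h - x\<^sub>0) \<le> p (h' + x\<^sub>0) - a'\<close> for all pairs of points of the graph.\<close>
lemma dominated_linear_graph_gap:
  assumes p: "sublinear_on p X" and G: "dominated_linear_graph p X G" and x0: "x0 \<in> X"
  obtains c where "\<And>h a. (h, a) \<in> G \<Longrightarrow> a - p (h - x0) \<le> c \<and> c \<le> p (h + x0) - a"
proof -
  let ?L = "{a - p (h - x0) | h a. (h, a) \<in> G}"
  have gap: "a - p (h - x0) \<le> p (h' + x0) - a'" if "(h, a) \<in> G" "(h', a') \<in> G" for h a h' a'
  proof -
    have "h \<in> X" "h' \<in> X" using that dominated_linear_graphD(1)[OF G] by auto
    have "a + a' \<le> p ((h - x0) + (h' + x0))"
      using dominated_linear_graphD(5)[OF G dominated_linear_graphD(3)[OF G that]] by simp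
    also have "\<dots> \<le> p (h - x0) + p (h' + x0)"
      using p x0 \<open>h \<in> X\<close> \<open>h' \<in> X\<close> unfolding sublinear_on_def
      by (meson subspace_diff subspace_add)
    finally show ?thesis by simp
  qed
  have "(0, 0) \<in> G" using dominated_linear_graphD(2)[OF G] .
  then have "?L \<noteq> {}" "bdd_above ?L"
    using gap by (auto intro!: bdd_aboveI[of _ "p (0 + x0) - 0"])
  then show ?thesis
    using gap by (intro that[of "Sup ?L"]) (auto intro!: cSup_upper cSup_least)
qed

lemma dominated_linear_graph_extend_below:
  assumes p: "sublinear_on p X" and G: "dominated_linear_graph p X G" and x0: "x0 \<in> X"
    and c: "\<And>h a. (h, a) \<in> G \<Longrightarrow> a - p (h - x0) \<le> c \<and> c \<le> p (h + x0) - a"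
    and ha: "(h, a) \<in> G"
  shows "a + t * c \<le> p (h + t *\<^sub>R x0)"
proof -
  have X: "subspace X" and hom: "\<And>x c. x \<in> X \<Longrightarrow> 0 \<le> c \<Longrightarrow> p (c *\<^sub>R x) = c * p x"
    using p unfolding sublinear_on_def by blast+
  have h: "h \<in> X" using ha dominated_linear_graphD(1)[OF G] by auto
  have scaled: "(inverse s *\<^sub>R h, inverse s * a) \<in> G" for s
    using dominated_linear_graphD(4)[OF G ha] .
  consider "t = 0" | "t > 0" | "t < 0" by linarith
  then show ?thesis
  proof cases
    case 1
    then show ?thesis using dominated_linear_graphD(5)[OF G ha] by simp
  next
    case 2
    have "c \<le> p (inverse t *\<^sub>R h + x0) - inverse t * a" using c[OF scaled] by blast
    then have "t * c \<le> t * p (inverse t *\<^sub>R h + x0) - a"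
      using 2 by (simp add: field_simps)
    also have "t * p (inverse t *\<^sub>R h + x0) = p (h + t *\<^sub>R x0)"
      using hom[of "inverse t *\<^sub>R h + x0" t] 2 h x0 X
      by (simp add: subspace_add subspace_scale scaleR_add_right)
    finally show ?thesis by simp
  next
    case 3
    then obtain s where s: "0 < s" "t = - s" by (metis neg_0_less_iff_less minus_minus)
    have "inverse s * a - p (inverse s *\<^sub>R h - x0) \<le> c" using c[OF scaled] by blast
    then have "a - s * p (inverse s *\<^sub>R h - x0) \<le> s * c"
      using s by (simp add: field_simps)
    also have "s * p (inverse s *\<^sub>R h - x0) = p (h + t *\<^sub>R x0)"
      using hom[of "inverse s *\<^sub>R h - x0" s] s h x0 X
      by (simp add: subspace_diff subspace_scale scaleR_diff_right)
    finally show ?thesis using s by simp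
  qed
qed

lemma dominated_linear_graph_extend:
  assumes p: "sublinear_on p X" and G: "dominated_linear_graph p X G" and x0: "x0 \<in> X"
    and c: "\<And>h a. (h, a) \<in> G \<Longrightarrow> a - p (h - x0) \<le> c \<and> c \<le> p (h + x0) - a"
  shows "dominated_linear_graph p X {(h + t *\<^sub>R x0, a + t * c) | h a t. (h, a) \<in> G}"
    (is "dominated_linear_graph p X ?G")
  unfolding dominated_linear_graph_def
proof (intro conjI allI impI)
  show "?G \<subseteq> X \<times> UNIV"
    using dominated_linear_graphD(1)[OF G] x0 p unfolding sublinear_on_def
    by (auto simp: subspace_add subspace_scale)
  show "(0, 0) \<in> ?G"
    using dominated_linear_graphD(2)[OF G] by force
next
  fix x a y b
  assume "(x, a) \<in> ?G" "(y, b) \<in> ?G"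
  then obtain h a' t h' b' t' where "(h, a') \<in> G" "(h', b') \<in> G"
    "x = h + t *\<^sub>R x0" "a = a' + t * c" "y = h' + t' *\<^sub>R x0" "b = b' + t' * c" by blast
  then have "(x + y, a + b) = ((h + h') + (t + t') *\<^sub>R x0, (a' + b') + (t + t') * c)"
    and "(h + h', a' + b') \<in> G"
    by (simp add: algebra_simps, blast intro: dominated_linear_graphD(3)[OF G])
  then show "(x + y, a + b) \<in> ?G" by blast
next
  fix x a r
  assume "(x, a) \<in> ?G"
  then obtain h a' t where "(h, a') \<in> G" "x = h + t *\<^sub>R x0" "a = a' + t * c" by blast
  then have "(r *\<^sub>R x, r * a) = (r *\<^sub>R h + (r * t) *\<^sub>R x0, r * a' + (r * t) * c)"
    and "(r *\<^sub>R h, r * a') \<in> G"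
    by (simp add: algebra_simps, blast intro: dominated_linear_graphD(4)[OF G])
  then show "(r *\<^sub>R x, r * a) \<in> ?G" by blast
next
  fix x a
  assume "(x, a) \<in> ?G"
  then show "a \<le> p x" using dominated_linear_graph_extend_below[OF p G x0 c] by blast
qed

lemma dominated_linear_graph_line:
  assumes p: "sublinear_on p X" and b: "b \<in> X"
  shows "dominated_linear_graph p X {(t *\<^sub>R b, t * p b) | t. True}"
    (is "dominated_linear_graph p X ?L")
  unfolding dominated_linear_graph_def
proof (intro conjI allI impI)
  have X: "subspace X" and hom: "\<And>x c. x \<in> X \<Longrightarrow> 0 \<le> c \<Longrightarrow> p (c *\<^sub>R x) = c * p x"
    using p unfolding sublinear_on_def by blast+
  show "?L \<subseteq> X \<times> UNIV" using b X by (auto simp: subspace_scale)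
  show "(0, 0) \<in> ?L" by (auto intro!: exI[of _ 0])
  show "(x + y, a + c) \<in> ?L" if mem: "(x, a) \<in> ?L" "(y, c) \<in> ?L" for x a y c
  proof -
    obtain t s where "x = t *\<^sub>R b" "a = t * p b" "y = s *\<^sub>R b" "c = s * p b" using mem by blast
    then show ?thesis by (auto intro!: exI[of _ "t + s"] simp: algebra_simps)
  qed
  show "(r *\<^sub>R x, r * a) \<in> ?L" if mem: "(x, a) \<in> ?L" for x a r
  proof -
    obtain t where "x = t *\<^sub>R b" "a = t * p b" using mem by blast
    then show ?thesis by (auto intro!: exI[of _ "r * t"])
  qed
  show "a \<le> p x" if "(x, a) \<in> ?L" for x a
  proof -
    obtain t where t: "x = t *\<^sub>R b" "a = t * p b" using \<open>(x, a) \<in> ?L\<close> by blast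
    show ?thesis
    proof (cases "0 \<le> t")
      case True
      then show ?thesis using t hom[OF b] by simp
    next
      case False
      have "t * p b = (- t) * (- p b)" by simp
      also have "\<dots> \<le> (- t) * p (- b)"
        using False sublinear_on_neg[OF p b] by (intro mult_left_mono) auto
      also have "\<dots> = p x"
        using False t hom[of "- b" "- t"] b X by (simp add: subspace_neg)
      finally show ?thesis using t by simp
    qed
  qed
qed

lemma dominated_linear_graph_maximal_total:
  assumes p: "sublinear_on p X" and M: "dominated_linear_graph p X M"
    and maximal: "\<And>G. dominated_linear_graph p X G \<Longrightarrow> M \<subseteq> G \<Longrightarrow> G = M"
    and x: "x \<in> X"
  shows "\<exists>a. (x, a) \<in> M"
proof -
  obtain c where c: "\<And>h a. (h, a) \<in> M \<Longrightarrow> a - p (h - x) \<le> c \<and> c \<le> p (h + x) - a"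
    using dominated_linear_graph_gap[OF p M x] by blast
  let ?G = "{(h + t *\<^sub>R x, a + t * c) | h a t. (h, a) \<in> M}"
  have "M \<subseteq> ?G" by (force intro: exI[of _ 0])
  then have "?G = M" using maximal dominated_linear_graph_extend[OF p M x c] by blast
  moreover have "(x, c) \<in> ?G"
    using dominated_linear_graphD(2)[OF M] by (force intro: exI[of _ 1])
  ultimately show ?thesis by blast
qed

lemma dominated_linear_graph_functional:
  assumes M: "dominated_linear_graph p X M" and "p 0 = 0" and total: "\<And>x. x \<in> X \<Longrightarrow> \<exists>a. (x, a) \<in> M"
  defines "F \<equiv> \<lambda>x. THE a. (x, a) \<in> M"
  shows "linear_on X F" "\<forall>x\<in>X. F x \<le> p x" "\<And>x a. (x, a) \<in> M \<Longrightarrow> F x = a"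
proof -
  have FM: "(x, F x) \<in> M" if "x \<in> X" for x
    unfolding F_def using total[OF that] dominated_linear_graph_unique[OF M \<open>p 0 = 0\<close>]
    by (metis theI)
  show F_eq: "F x = a" if "(x, a) \<in> M" for x a
    using that dominated_linear_graphD(1)[OF M] FM dominated_linear_graph_unique[OF M \<open>p 0 = 0\<close>]
    by blast
  show "linear_on X F"
    unfolding linear_on_def using FM F_eq dominated_linear_graphD(3,4)[OF M] by simp
  show "\<forall>x\<in>X. F x \<le> p x" using FM dominated_linear_graphD(5)[OF M] by blast
qed

theorem hahn_banach_sublinear:
  assumes p: "sublinear_on p X" and b: "b \<in> X"
  obtains F where "linear_on X F" "\<forall>x\<in>X. F x \<le> p x" "F b = p b"
proof -
  define G0 where "G0 = {(t *\<^sub>R b, t * p b) | t. True}"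
  define \<A> where "\<A> = {G. dominated_linear_graph p X G \<and> G0 \<subseteq> G}"
  have "G0 \<in> \<A>" unfolding \<A>_def G0_def using dominated_linear_graph_line[OF p b] by blast
  then have "\<exists>M\<in>\<A>. \<forall>G\<in>\<A>. M \<subseteq> G \<longrightarrow> G = M"
  proof (intro subset_Zorn_nonempty)
    fix C assume "C \<noteq> {}" "subset.chain \<A> C"
    then show "\<Union>C \<in> \<A>"
      unfolding \<A>_def subset.chain_def using dominated_linear_graph_Union[of C p X] by blast
  qed blast
  then obtain M where "M \<in> \<A>" and max: "\<forall>G\<in>\<A>. M \<subseteq> G \<longrightarrow> G = M" by blast
  then have M: "dominated_linear_graph p X M" "G0 \<subseteq> M" unfolding \<A>_def by simp_all
  have "G = M" if "dominated_linear_graph p X G" "M \<subseteq> G" for G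
    using max that M(2) unfolding \<A>_def by blast
  then have "\<And>x. x \<in> X \<Longrightarrow> \<exists>a. (x, a) \<in> M"
    using dominated_linear_graph_maximal_total[OF p M(1)] by blast
  note F = dominated_linear_graph_functional[OF M(1) sublinear_on_zero[OF p] this]
  have "(b, p b) \<in> M" using M(2) unfolding G0_def by (force intro: exI[of _ 1])
  then show ?thesis using that F by blast
qed

section \<open>Projections onto finite-dimensional subspaces\<close>

lemma is_norm_onD:
  assumes "is_norm_on N X"
  shows "subspace X" "\<And>x. x \<in> X \<Longrightarrow> 0 \<le> N x" "N 0 = 0"
    "\<And>x c. x \<in> X \<Longrightarrow> N (c *\<^sub>R x) = \<bar>c\<bar> * N x"
    "\<And>x y. x \<in> X \<Longrightarrow> y \<in> X \<Longrightarrow> N (x + y) \<le> N x + N y"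
    "\<And>x. x \<in> X \<Longrightarrow> x \<noteq> 0 \<Longrightarrow> 0 < N x"
  using assms subspace_0[of X] unfolding is_norm_on_def by (simp_all add: less_le)

lemma is_norm_on_subspace:
  assumes "is_norm_on N X" "subspace X'" "X' \<subseteq> X"
  shows "is_norm_on N X'"
  using assms unfolding is_norm_on_def by (simp add: subset_iff)

lemma is_norm_on_sublinear: "is_norm_on N X \<Longrightarrow> sublinear_on N X"
  unfolding is_norm_on_def sublinear_on_def by simp

lemma linear_on_0:
  assumes "linear_on X f" "subspace X"
  shows "f 0 = 0"
  using assms subspace_0[of X] unfolding linear_on_def by (metis scale_zero_left)

lemma linear_on_id: "linear_on X (\<lambda>x. x)"
  unfolding linear_on_def by simp

lemma linear_on_add: "linear_on X f \<Longrightarrow> linear_on X g \<Longrightarrow> linear_on X (\<lambda>x. f x + g x)"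
  unfolding linear_on_def by (simp add: algebra_simps)

lemma linear_on_diff: "linear_on X f \<Longrightarrow> linear_on X g \<Longrightarrow> linear_on X (\<lambda>x. f x - g x)"
  unfolding linear_on_def by (simp add: algebra_simps)

lemma linear_on_scaleR_left:
  fixes f :: "'a::real_vector \<Rightarrow> real"
  shows "linear_on X f \<Longrightarrow> linear_on X (\<lambda>x. f x *\<^sub>R b)"
  unfolding linear_on_def by (simp add: scaleR_add_left)

lemma linear_on_compose:
  "linear_on X g \<Longrightarrow> g ` X \<subseteq> X' \<Longrightarrow> linear_on X' P \<Longrightarrow> linear_on X (\<lambda>x. P (g x))"
  unfolding linear_on_def by (simp add: image_subset_iff)

lemma norm_peak_functional:
  assumes N: "is_norm_on N X" and b: "b \<in> X" "b \<noteq> 0"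
  obtains f where "linear_on X f" "f b = 1" "\<forall>x\<in>X. \<bar>f x\<bar> * N b \<le> N x"
proof -
  obtain F where F: "linear_on X F" "\<forall>x\<in>X. F x \<le> N x" "F b = N b"
    using hahn_banach_sublinear[OF is_norm_on_sublinear[OF N] b(1)] by blast
  have Nb: "0 < N b" using is_norm_onD(6)[OF N b] .
  have "\<bar>F x\<bar> \<le> N x" if x: "x \<in> X" for x
  proof -
    have "- F x = F (- x)" using F(1) x unfolding linear_on_def by (metis scaleR_minus1_left)
    also have "\<dots> \<le> N (- x)" using F(2) x is_norm_onD(1)[OF N] by (simp add: subspace_neg)
    also have "\<dots> = N x" using is_norm_onD(4)[OF N x, of "-1"] by simp
    finally show ?thesis using F(2) x by auto
  qed
  moreover have "linear_on X (\<lambda>x. F x / N b)"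
    using F(1) unfolding linear_on_def by (simp add: add_divide_distrib)
  ultimately show ?thesis
    using that[of "\<lambda>x. F x / N b"] F(3) Nb by (simp add: abs_div)
qed

definition proj_bounded_by ::
    "('a::real_vector \<Rightarrow> real) \<Rightarrow> 'a set \<Rightarrow> 'a set \<Rightarrow> ('a \<Rightarrow> 'a) \<Rightarrow> real \<Rightarrow> bool" where
  "proj_bounded_by N X Y P K \<longleftrightarrow>
     linear_on X P \<and> P ` X \<subseteq> Y \<and> (\<forall>y\<in>Y. P y = y) \<and> (\<forall>x\<in>X. N (P x) \<le> K * N x)"

lemma proj_bounded_by_is_bounded_proj:
  "proj_bounded_by N X Y P K \<Longrightarrow> is_bounded_proj N X Y P"
  unfolding proj_bounded_by_def is_bounded_proj_def linear_on_def by blast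

lemma linear_on_diff_scaleR:
  assumes "linear_on X f" "subspace X" "x \<in> X" "b \<in> X"
  shows "f (x - c *\<^sub>R b) = f x - c * f b"
proof -
  have cb: "(- c) *\<^sub>R b \<in> X" using assms(2,4) by (rule subspace_scale)
  have "f (x + (- c) *\<^sub>R b) = f x + f ((- c) *\<^sub>R b)"
    using assms(1,3) cb unfolding linear_on_def by blast
  also have "f ((- c) *\<^sub>R b) = (- c) *\<^sub>R f b"
    using assms(1,4) unfolding linear_on_def by blast
  finally show ?thesis by simp
qed

lemma linear_on_shear_in_kernel:
  assumes "linear_on X f" "subspace X" "b \<in> X" "f b = 1" "x \<in> X"
  shows "x - f x *\<^sub>R b \<in> {x \<in> X. f x = 0}"
  using linear_on_diff_scaleR[OF assms(1,2,5,3), of "f x"] assms(4)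
    subspace_diff[OF assms(2,5) subspace_scale[OF assms(2,3)]] by simp

lemma is_norm_on_diff_scaleR_le:
  assumes N: "is_norm_on N X" and "x \<in> X" "b \<in> X" and "\<bar>c\<bar> * N b \<le> N x"
  shows "N (x - c *\<^sub>R b) \<le> 2 * N x"
proof -
  have "N (x - c *\<^sub>R b) \<le> N x + \<bar>c\<bar> * N b"
    using is_norm_onD(5)[OF N \<open>x \<in> X\<close> subspace_scale[OF is_norm_onD(1)[OF N] \<open>b \<in> X\<close>, of "- c"]]
      is_norm_onD(4)[OF N \<open>b \<in> X\<close>, of "- c"]
    by simp
  then show ?thesis using assms(4) by simp
qed

lemma span_insert_kernel_component:
  assumes f: "linear_on X f" "subspace X" "b \<in> X" "f b = 1"
    and Y: "subspace Y" "Y \<subseteq> {x \<in> X. f x = 0}" and y: "y \<in> span (insert b Y)"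
  shows "y - f y *\<^sub>R b \<in> Y"
proof -
  obtain k where "y - k *\<^sub>R b \<in> span Y" using y span_breakdown_eq by blast
  then have k: "y - k *\<^sub>R b \<in> Y" using span_minimal[OF order_refl Y(1)] by blast
  have "y \<in> X" using y Y(2) f(2,3) span_minimal[of "insert b Y" X] by auto
  then have "f y = k" using k Y(2) linear_on_diff_scaleR[OF f(1,2) _ f(3), of y k] f(4) by auto
  then show ?thesis using k by simp
qed

text \<open>Splitting off the direction \<open>b\<close> with a norming functional \<open>f\<close>:
  \<open>x = f x *\<^sub>R b + (x - f x *\<^sub>R b)\<close>, where the second summand lies in \<open>ker f\<close> and has norm
  at most \<open>2 * N x\<close>.\<close>
lemma proj_bounded_by_insert:
  assumes N: "is_norm_on N X" and b: "b \<in> X"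
    and f: "linear_on X f" "f b = 1" "\<forall>x\<in>X. \<bar>f x\<bar> * N b \<le> N x"
    and Y: "subspace Y" "Y \<subseteq> {x \<in> X. f x = 0}"
    and P: "proj_bounded_by N {x \<in> X. f x = 0} Y P K" and K: "0 \<le> K"
  shows "proj_bounded_by N X (span (insert b Y)) (\<lambda>x. f x *\<^sub>R b + P (x - f x *\<^sub>R b)) (1 + 2 * K)"
proof -
  have X: "subspace X" using is_norm_onD(1)[OF N] .
  have ker: "x - f x *\<^sub>R b \<in> {x \<in> X. f x = 0}" if "x \<in> X" for x
    using linear_on_shear_in_kernel[OF f(1) X b f(2) that] .
  have P_ker: "linear_on {x \<in> X. f x = 0} P" and Prange: "P ` {x \<in> X. f x = 0} \<subseteq> Y"
    and Pid: "\<And>y. y \<in> Y \<Longrightarrow> P y = y"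
    and Pbound: "\<And>x. x \<in> {x \<in> X. f x = 0} \<Longrightarrow> N (P x) \<le> K * N x"
    using P unfolding proj_bounded_by_def by blast+
  have "linear_on X (\<lambda>x. x - f x *\<^sub>R b)"
    by (intro linear_on_diff linear_on_id linear_on_scaleR_left f(1))
  then have "linear_on X (\<lambda>x. P (x - f x *\<^sub>R b))"
    using ker by (intro linear_on_compose[OF _ _ P_ker]) auto
  then have "linear_on X (\<lambda>x. f x *\<^sub>R b + P (x - f x *\<^sub>R b))"
    by (intro linear_on_add linear_on_scaleR_left f(1))
  moreover have "f x *\<^sub>R b + P (x - f x *\<^sub>R b) \<in> span (insert b Y)" if "x \<in> X" for x
  proof (rule span_add)
    show "f x *\<^sub>R b \<in> span (insert b Y)" by (simp add: span_base span_scale)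
    have "P (x - f x *\<^sub>R b) \<in> Y" using Prange ker[OF that] by blast
    then show "P (x - f x *\<^sub>R b) \<in> span (insert b Y)" by (simp add: span_base)
  qed
  moreover have "f y *\<^sub>R b + P (y - f y *\<^sub>R b) = y" if "y \<in> span (insert b Y)" for y
    using Pid span_insert_kernel_component[OF f(1) X b f(2) Y that] by simp
  moreover have "N (f x *\<^sub>R b + P (x - f x *\<^sub>R b)) \<le> (1 + 2 * K) * N x" if x: "x \<in> X" for x
  proof -
    have g: "N (x - f x *\<^sub>R b) \<le> 2 * N x"
      using is_norm_on_diff_scaleR_le[OF N x b] f(3) x by blast
    have "P (x - f x *\<^sub>R b) \<in> X" using Prange ker[OF x] Y(2) by blast
    then have "N (f x *\<^sub>R b + P (x - f x *\<^sub>R b)) \<le> N (f x *\<^sub>R b) + N (P (x - f x *\<^sub>R b))"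
      by (rule is_norm_onD(5)[OF N subspace_scale[OF X b]])
    also have "\<dots> \<le> \<bar>f x\<bar> * N b + K * N (x - f x *\<^sub>R b)"
      using is_norm_onD(4)[OF N b] Pbound[OF ker[OF x]] by simp
    also have "\<dots> \<le> N x + K * (2 * N x)"
      using f(3) x g K by (intro add_mono mult_left_mono) auto
    finally show ?thesis by (simp add: algebra_simps)
  qed
  ultimately show ?thesis unfolding proj_bounded_by_def by (simp add: image_subset_iff)
qed

lemma span_insert_shear:
  assumes "b \<in> B"
  shows "span (insert b (span ((\<lambda>v. v - g v *\<^sub>R b) ` (B - {b})))) = span B"
    (is "span (insert b (span ?S)) = _")
proof
  have "?S \<subseteq> span B" using assms by (auto intro!: span_diff[OF span_base span_scale[OF span_base]])
  then have "span ?S \<subseteq> span B" by (simp add: span_minimal)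
  then show "span (insert b (span ?S)) \<subseteq> span B"
    using assms by (simp add: span_minimal span_base)
  have "v \<in> span (insert b (span ?S))" if "v \<in> B" for v
  proof (cases "v = b")
    case False
    then have "v - g v *\<^sub>R b \<in> span (insert b (span ?S))"
      using that by (auto intro!: span_base)
    moreover have "g v *\<^sub>R b \<in> span (insert b (span ?S))" by (simp add: span_base span_scale)
    ultimately show ?thesis using span_add by fastforce
  qed (simp add: span_base)
  then show "span B \<subseteq> span (insert b (span ?S))" by (simp add: span_minimal subsetI)
qed

lemma linear_on_kernel_subspace:
  assumes "linear_on X f" "subspace X"
  shows "subspace {x \<in> X. f x = 0}"
  using assms subspace_0[OF assms(2)] linear_on_0[OF assms]
  unfolding linear_on_def subspace_def by simp

lemma proj_bounded_by_mono:
  assumes "proj_bounded_by N X Y P K" "K \<le> K'" "\<And>x. x \<in> X \<Longrightarrow> 0 \<le> N x"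
  shows "proj_bounded_by N X Y P K'"
  using assms unfolding proj_bounded_by_def by (meson mult_right_mono order_trans)

lemma proj_bounded_by_zero:
  assumes "is_norm_on N X" "0 \<le> K"
  shows "proj_bounded_by N X {0} (\<lambda>x. 0) K"
  unfolding proj_bounded_by_def linear_on_def using is_norm_onD(2,3)[OF assms(1)] assms(2) by auto

lemma proj_onto_span_exists:
  assumes "is_norm_on N X" "finite B" "B \<subseteq> X"
  shows "\<exists>P. proj_bounded_by N X (span B) P (2 ^ card B - 1)"
  using assms
proof (induction "card B" arbitrary: X B rule: less_induct)
  case less
  note N = less.prems(1)
  have K: "(0::real) \<le> 2 ^ card B - 1" by simp
  show ?case
  proof (cases "B \<subseteq> {0}")
    case True
    then have "span B = {0}" using span_mono[OF True] span_zero[of B] by auto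
    then show ?thesis using proj_bounded_by_zero[OF N K] by metis
  next
    case False
    then obtain b where b: "b \<in> B" "b \<noteq> 0" by blast
    then have bX: "b \<in> X" using less.prems(3) by blast
    obtain f where f: "linear_on X f" "f b = 1" "\<forall>x\<in>X. \<bar>f x\<bar> * N b \<le> N x"
      using norm_peak_functional[OF N bX b(2)] by blast
    define B' where "B' = (\<lambda>v. v - f v *\<^sub>R b) ` (B - {b})"
    have X: "subspace X" using is_norm_onD(1)[OF N] .
    have ker: "subspace {x \<in> X. f x = 0}" using linear_on_kernel_subspace[OF f(1) X] .
    have "B' \<subseteq> {x \<in> X. f x = 0}"
      unfolding B'_def using less.prems(3) linear_on_shear_in_kernel[OF f(1) X bX f(2)] by auto
    moreover have "card B' < card B"
      unfolding B'_def using less.prems(2) b(1)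
      by (meson card_Diff1_less card_image_le finite_Diff le_less_trans)
    ultimately obtain P where P: "proj_bounded_by N {x \<in> X. f x = 0} (span B') P (2 ^ card B' - 1)"
      using less.hyps[of B' "{x \<in> X. f x = 0}"] is_norm_on_subspace[OF N ker] less.prems(2)
      unfolding B'_def by auto
    have "span B' \<subseteq> {x \<in> X. f x = 0}" using \<open>B' \<subseteq> _\<close> ker by (simp add: span_minimal)
    from proj_bounded_by_insert[OF N bX f subspace_span this P]
    have "proj_bounded_by N X (span B) (\<lambda>x. f x *\<^sub>R b + P (x - f x *\<^sub>R b)) (1 + 2 * (2 ^ card B' - 1))"
      using span_insert_shear[OF b(1)] unfolding B'_def by simp
    moreover have "1 + 2 * (2 ^ card B' - 1) \<le> (2::real) ^ card B - 1"
    proof -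
      have "(2::real) ^ Suc (card B') \<le> 2 ^ card B"
        using \<open>card B' < card B\<close> by (intro power_increasing) auto
      then show ?thesis by simp
    qed
    ultimately show ?thesis using proj_bounded_by_mono is_norm_onD(2)[OF N] by blast
  qed
qed

section \<open>Relative projection constants\<close>

lemma is_bounded_proj_zero:
  assumes "is_bounded_proj N X Y P" "subspace X"
  shows "P 0 = 0"
  using assms subspace_0[OF assms(2)] unfolding is_bounded_proj_def by (metis scale_zero_left)

lemma bdd_above_op_norm_on:
  assumes N: "is_norm_on N X" and P: "is_bounded_proj N X Y P"
  shows "bdd_above {N (P x) | x. x \<in> X \<and> N x \<le> 1}"
proof -
  obtain K where K: "\<forall>x\<in>X. N (P x) \<le> K * N x" using P unfolding is_bounded_proj_def by blast
  have "N (P x) \<le> \<bar>K\<bar>" if "x \<in> X" "N x \<le> 1" for x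
  proof -
    have "N (P x) \<le> K * N x" using K that(1) by blast
    also have "\<dots> \<le> \<bar>K\<bar> * 1"
      using is_norm_onD(2)[OF N that(1)] that(2) by (intro mult_mono) auto
    finally show ?thesis by simp
  qed
  then show ?thesis by (auto intro!: bdd_aboveI[of _ "\<bar>K\<bar>"])
qed

lemma op_norm_on_upper:
  assumes "is_norm_on N X" "is_bounded_proj N X Y P" "x \<in> X" "N x \<le> 1"
  shows "N (P x) \<le> op_norm_on N X P"
  unfolding op_norm_on_def using assms bdd_above_op_norm_on[OF assms(1,2)] by (intro cSup_upper) auto

lemma op_norm_on_nonneg:
  assumes N: "is_norm_on N X" and P: "is_bounded_proj N X Y P"
  shows "0 \<le> op_norm_on N X P"
  using op_norm_on_upper[OF N P subspace_0[OF is_norm_onD(1)[OF N]]]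
    is_bounded_proj_zero[OF P is_norm_onD(1)[OF N]] is_norm_onD(3)[OF N] by simp

lemma op_norm_on_le:
  assumes N: "is_norm_on N X" and "0 \<le> K" and bound: "\<forall>x\<in>X. N (P x) \<le> K * N x"
  shows "op_norm_on N X P \<le> K"
  unfolding op_norm_on_def
proof (rule cSup_least)
  show "{N (P x) |x. x \<in> X \<and> N x \<le> 1} \<noteq> {}"
    using subspace_0[OF is_norm_onD(1)[OF N]] is_norm_onD(3)[OF N] by auto
  fix v assume "v \<in> {N (P x) |x. x \<in> X \<and> N x \<le> 1}"
  then obtain x where x: "x \<in> X" "N x \<le> 1" "v = N (P x)" by blast
  have "N (P x) \<le> K * N x" using bound x(1) by blast
  also have "\<dots> \<le> K" using x(2) \<open>0 \<le> K\<close> by (simp add: mult_left_le)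
  finally show "v \<le> K" using x(3) by simp
qed

lemma rel_proj_const_le_op_norm_on:
  assumes "is_norm_on N X" "is_bounded_proj N X Y P"
  shows "rel_proj_const N X Y \<le> op_norm_on N X P"
  unfolding rel_proj_const_def using assms op_norm_on_nonneg[OF assms(1)]
  by (intro cInf_lower) (auto intro!: bdd_belowI[of _ 0])

lemma rel_proj_const_le:
  assumes N: "is_norm_on N X" and P: "proj_bounded_by N X Y P K" and "0 \<le> K"
  shows "rel_proj_const N X Y \<le> K"
proof -
  have "rel_proj_const N X Y \<le> op_norm_on N X P"
    using rel_proj_const_le_op_norm_on[OF N proj_bounded_by_is_bounded_proj[OF P]] .
  also have "\<dots> \<le> K"
    using op_norm_on_le[OF N \<open>0 \<le> K\<close>] P unfolding proj_bounded_by_def by blast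
  finally show ?thesis .
qed

lemma rel_proj_const_ge:
  assumes "is_bounded_proj N X Y P0"
    and "\<And>P. is_bounded_proj N X Y P \<Longrightarrow> c \<le> op_norm_on N X P"
  shows "c \<le> rel_proj_const N X Y"
  unfolding rel_proj_const_def using assms by (intro cInf_greatest) auto

lemma proj_onto_finite_dim_exists:
  assumes N: "is_norm_on N X" and Y: "subspace Y" "Y \<subseteq> X" "0 < dim Y"
  obtains P where "proj_bounded_by N X Y P (2 ^ dim Y - 1)"
proof -
  obtain B where B: "B \<subseteq> Y" "independent B" "Y \<subseteq> span B" "card B = dim Y"
    by (rule basis_exists)
  have "finite B" using B(4) Y(3) card_ge_0_finite by metis
  moreover have "span B = Y" using B(1,3) Y(1) span_minimal[of B Y] by auto
  ultimately show ?thesis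
    using proj_onto_span_exists[OF N, of B] B(1,4) Y(2) that by auto
qed

lemma rel_proj_const_le_dim:
  assumes "is_norm_on N X" "subspace Y" "Y \<subseteq> X" "0 < dim Y"
  shows "rel_proj_const N X Y \<le> 2 ^ dim Y - 1"
proof -
  obtain P where "proj_bounded_by N X Y P (2 ^ dim Y - 1)"
    using proj_onto_finite_dim_exists[OF assms] .
  then show ?thesis by (rule rel_proj_const_le[OF assms(1)]) simp
qed

lemma bdd_above_lambda_abs_set:
  assumes "0 < m"
  shows "bdd_above {rel_proj_const N X Y | N X (Y :: (real \<Rightarrow> real) set).
    is_banach_on N X \<and> subspace Y \<and> Y \<subseteq> X \<and> dim Y = m}"
  using rel_proj_const_le_dim assms unfolding is_banach_on_def
  by (intro bdd_aboveI[of _ "2 ^ m - 1"]) fastforce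

locale linear_retraction =
  fixes \<phi> :: "'a::real_vector \<Rightarrow> 'b::real_vector" and \<psi> :: "'b \<Rightarrow> 'a"
  assumes linear_embed: "linear \<phi>" and linear_retract: "linear \<psi>"
    and retract_embed [simp]: "\<psi> (\<phi> x) = x"
begin

lemma is_norm_on_image:
  assumes "is_norm_on N X"
  shows "is_norm_on (\<lambda>g. N (\<psi> g)) (\<phi> ` X)"
proof -
  have "\<phi> x = 0 \<longleftrightarrow> x = 0" for x
    using retract_embed[of x] linear_0[OF linear_retract] linear_0[OF linear_embed] by metis
  then show ?thesis
    using assms linear_subspace_image[OF linear_embed]
    unfolding is_norm_on_def
    by (auto simp: linear_add[OF linear_retract] linear_scale[OF linear_retract])
qed

lemma is_banach_on_image:
  assumes "is_banach_on N X"
  shows "is_banach_on (\<lambda>g. N (\<psi> g)) (\<phi> ` X)"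
  unfolding is_banach_on_def
proof (intro conjI allI impI)
  show "is_norm_on (\<lambda>g. N (\<psi> g)) (\<phi> ` X)"
    using assms is_norm_on_image unfolding is_banach_on_def by blast
  fix s :: "nat \<Rightarrow> 'b"
  assume s: "\<forall>n. s n \<in> \<phi> ` X" and "\<forall>e>0. \<exists>M. \<forall>m\<ge>M. \<forall>n\<ge>M. N (\<psi> (s m - s n)) < e"
  then have "\<forall>e>0. \<exists>M. \<forall>m\<ge>M. \<forall>n\<ge>M. N (\<psi> (s m) - \<psi> (s n)) < e"
    by (simp add: linear_diff[OF linear_retract])
  moreover have "\<psi> (s n) \<in> X" for n using s[rule_format, of n] by auto
  ultimately obtain l where l: "l \<in> X" "\<forall>e>0. \<exists>M. \<forall>n\<ge>M. N (\<psi> (s n) - l) < e"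
    using assms[unfolded is_banach_on_def, THEN conjunct2, rule_format, of "\<lambda>n. \<psi> (s n)"] by blast
  then show "\<exists>l\<in>\<phi> ` X. \<forall>e>0. \<exists>M. \<forall>n\<ge>M. N (\<psi> (s n - l)) < e"
    by (intro bexI[of _ "\<phi> l"]) (simp_all add: linear_diff[OF linear_retract])
qed

lemma dim_image: "dim (\<phi> ` Y) = dim Y"
proof -
  have inj: "inj_on \<phi> A" for A by (metis retract_embed inj_on_inverseI)
  obtain B where B: "B \<subseteq> Y" "independent B" "Y \<subseteq> span B" "card B = dim Y"
    by (rule basis_exists)
  have "span B = span Y"
    using B(1,3) span_mono[of B Y] span_mono[of Y "span B"] span_span[of B] by auto
  then have "span (\<phi> ` B) = span (\<phi> ` Y)"
    using span_linear_image[OF linear_embed] by metis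
  moreover have "independent (\<phi> ` B)"
    using linear_independent_injective_image[OF linear_embed B(2) inj] .
  ultimately show ?thesis
    using dim_eq_card[of "\<phi> ` B" "\<phi> ` Y"] card_image[OF inj] B(4) by simp
qed

lemma is_bounded_proj_pullback:
  assumes "is_bounded_proj (\<lambda>g. N (\<psi> g)) (\<phi> ` X) (\<phi> ` Y) Q"
  shows "is_bounded_proj N X Y (\<lambda>x. \<psi> (Q (\<phi> x)))"
  using assms unfolding is_bounded_proj_def
  by (auto simp: linear_add[OF linear_embed] linear_add[OF linear_retract]
      linear_scale[OF linear_embed] linear_scale[OF linear_retract] image_subset_iff)

lemma op_norm_on_pullback:
  "op_norm_on N X (\<lambda>x. \<psi> (Q (\<phi> x))) = op_norm_on (\<lambda>g. N (\<psi> g)) (\<phi> ` X) Q"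
  unfolding op_norm_on_def by (rule arg_cong[where f = Sup]) auto

lemma rel_proj_const_le_image:
  assumes N: "is_norm_on N X" and Y: "subspace Y" "Y \<subseteq> X" "0 < dim Y"
  shows "rel_proj_const N X Y \<le> rel_proj_const (\<lambda>g. N (\<psi> g)) (\<phi> ` X) (\<phi> ` Y)"
proof -
  obtain Q where "proj_bounded_by (\<lambda>g. N (\<psi> g)) (\<phi> ` X) (\<phi> ` Y) Q (2 ^ dim (\<phi> ` Y) - 1)"
    using proj_onto_finite_dim_exists[OF is_norm_on_image[OF N]] Y dim_image
      linear_subspace_image[OF linear_embed Y(1)] by (metis image_mono)
  then show ?thesis
  proof (intro rel_proj_const_ge proj_bounded_by_is_bounded_proj)
    fix Q assume "is_bounded_proj (\<lambda>g. N (\<psi> g)) (\<phi> ` X) (\<phi> ` Y) Q"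
    then have "rel_proj_const N X Y \<le> op_norm_on N X (\<lambda>x. \<psi> (Q (\<phi> x)))"
      by (intro rel_proj_const_le_op_norm_on[OF N] is_bounded_proj_pullback)
    then show "rel_proj_const N X Y \<le> op_norm_on (\<lambda>g. N (\<psi> g)) (\<phi> ` X) Q"
      by (simp only: op_norm_on_pullback)
  qed
qed

end

section \<open>The spaces \<open>\<ell>\<^sub>\<infinity>\<^sup>n\<close>\<close>

lemma scaleR_fun_apply [simp]: "(c *\<^sub>R f) x = c *\<^sub>R f x"
  by (simp add: scaleR_fun_def)

lemma linf_norm_eq_Max: "linf_norm n x = Max (insert 0 ((\<lambda>i. \<bar>x i\<bar>) ` {..<n}))"
  unfolding linf_norm_def by (rule arg_cong[where f = "\<lambda>S. Max (insert 0 S)"]) auto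

lemma linf_norm_le_iff: "linf_norm n x \<le> c \<longleftrightarrow> 0 \<le> c \<and> (\<forall>i<n. \<bar>x i\<bar> \<le> c)"
  unfolding linf_norm_eq_Max by auto

lemma linf_norm_less_iff: "linf_norm n x < c \<longleftrightarrow> 0 < c \<and> (\<forall>i<n. \<bar>x i\<bar> < c)"
  unfolding linf_norm_eq_Max by auto

lemma abs_le_linf_norm: "i < n \<Longrightarrow> \<bar>x i\<bar> \<le> linf_norm n x"
  unfolding linf_norm_eq_Max by (rule Max_ge) auto

lemma linf_norm_nonneg: "0 \<le> linf_norm n x"
  unfolding linf_norm_eq_Max by (rule Max_ge) auto

lemma subspace_linf_space: "subspace (linf_space n)"
  unfolding subspace_def linf_space_def by auto

lemma linf_norm_scaleR_le: "linf_norm n (c *\<^sub>R x) \<le> \<bar>c\<bar> * linf_norm n x"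
  unfolding linf_norm_le_iff
  using abs_le_linf_norm[of _ n x] linf_norm_nonneg[of n x] by (auto simp: abs_mult intro: mult_left_mono)

lemma is_norm_on_linf: "is_norm_on (linf_norm n) (linf_space n)"
  unfolding is_norm_on_def
proof (intro conjI ballI allI subspace_linf_space linf_norm_nonneg)
  fix x assume x: "x \<in> linf_space n"
  show "linf_norm n x = 0 \<longleftrightarrow> x = 0"
  proof
    assume "linf_norm n x = 0"
    then have "x i = 0" if "i < n" for i using that linf_norm_le_iff[of n x 0] by simp
    then show "x = 0" using x unfolding linf_space_def by (auto simp: fun_eq_iff not_le[symmetric])
  qed (use linf_norm_le_iff[of n 0 0] linf_norm_nonneg[of n 0] in simp)
  fix c
  show "linf_norm n (c *\<^sub>R x) = \<bar>c\<bar> * linf_norm n x"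
  proof (cases "c = 0")
    case False
    have "linf_norm n x = linf_norm n (inverse c *\<^sub>R (c *\<^sub>R x))" using False by simp
    also have "\<dots> \<le> \<bar>inverse c\<bar> * linf_norm n (c *\<^sub>R x)" by (rule linf_norm_scaleR_le)
    finally have "\<bar>c\<bar> * linf_norm n x \<le> linf_norm n (c *\<^sub>R x)"
      using False by (simp add: field_simps)
    then show ?thesis using linf_norm_scaleR_le[of n c x] by simp
  qed (use linf_norm_le_iff[of n 0 0] linf_norm_nonneg[of n 0] in simp)
next
  fix x y :: "nat \<Rightarrow> real"
  show "linf_norm n (x + y) \<le> linf_norm n x + linf_norm n y"
    unfolding linf_norm_le_iff
    using abs_le_linf_norm[of _ n x] abs_le_linf_norm[of _ n y] linf_norm_nonneg[of n x] linf_norm_nonneg[of n y]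
    by (auto intro: abs_triangle_ineq[THEN order_trans] add_mono)
qed

lemma is_banach_on_linf: "is_banach_on (linf_norm n) (linf_space n)"
  unfolding is_banach_on_def
proof (intro conjI allI impI is_norm_on_linf)
  fix s :: "nat \<Rightarrow> nat \<Rightarrow> real"
  assume cauchy: "\<forall>e>0. \<exists>M. \<forall>m\<ge>M. \<forall>k\<ge>M. linf_norm n (s m - s k) < e"
  have "Cauchy (\<lambda>k. s k i)" if i: "i < n" for i
  proof (rule metric_CauchyI)
    fix e :: real assume "0 < e"
    then obtain M where M: "\<forall>m\<ge>M. \<forall>k\<ge>M. linf_norm n (s m - s k) < e" using cauchy by blast
    have "\<bar>s m i - s k i\<bar> \<le> linf_norm n (s m - s k)" for m k
      using abs_le_linf_norm[OF i, of "s m - s k"] by simp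
    then show "\<exists>M. \<forall>m\<ge>M. \<forall>k\<ge>M. dist (s m i) (s k i) < e"
      using M unfolding dist_real_def by (meson le_less_trans)
  qed
  then have lim: "(\<lambda>k. s k i) \<longlonglongrightarrow> lim (\<lambda>k. s k i)" if "i < n" for i
    using that by (simp add: Cauchy_convergent_iff convergent_LIMSEQ_iff)
  define l where "l i = (if i < n then lim (\<lambda>k. s k i) else 0)" for i
  have "l \<in> linf_space n" unfolding linf_space_def l_def by auto
  moreover have "\<exists>M. \<forall>k\<ge>M. linf_norm n (s k - l) < e" if "0 < e" for e
  proof -
    have "\<forall>i\<in>{..<n}. eventually (\<lambda>k. \<bar>s k i - l i\<bar> < e) sequentially"
      using lim that unfolding l_def tendsto_iff dist_real_def by auto
    then have "eventually (\<lambda>k. \<forall>i\<in>{..<n}. \<bar>s k i - l i\<bar> < e) sequentially"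
      by (simp add: eventually_ball_finite)
    then show ?thesis
      using that unfolding eventually_sequentially linf_norm_less_iff by auto
  qed
  ultimately show "\<exists>l\<in>linf_space n. \<forall>e>0. \<exists>M. \<forall>k\<ge>M. linf_norm n (s k - l) < e" by blast
qed

text \<open>The universe \<open>real \<Rightarrow> real\<close> of \<open>lambda_abs\<close> contains a linear copy of \<open>nat \<Rightarrow> real\<close>,
  via step functions.\<close>
definition step_fun :: "(nat \<Rightarrow> real) \<Rightarrow> real \<Rightarrow> real" where
  "step_fun x r = x (nat \<lfloor>r\<rfloor>)"

definition sample_nat :: "(real \<Rightarrow> real) \<Rightarrow> nat \<Rightarrow> real" where
  "sample_nat g i = g (real i)"

interpretation step_fun: linear_retraction step_fun sample_nat
  by unfold_locales (auto intro!: linearI simp: step_fun_def sample_nat_def)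

lemma sum_fun_apply: "(\<Sum>j\<in>F. f j) x = (\<Sum>j\<in>F. f j x)"
  by (induction F rule: infinite_finite_induct) auto

lemma is_bounded_proj_range: "is_bounded_proj N X Y P \<Longrightarrow> x \<in> X \<Longrightarrow> P x \<in> Y"
  unfolding is_bounded_proj_def by blast

lemma is_bounded_proj_id: "is_bounded_proj N X Y P \<Longrightarrow> y \<in> Y \<Longrightarrow> P y = y"
  unfolding is_bounded_proj_def by blast

lemma is_bounded_proj_linear_on: "is_bounded_proj N X Y P \<Longrightarrow> linear_on X P"
  unfolding is_bounded_proj_def linear_on_def by blast

lemma linear_on_sum:
  assumes P: "linear_on X P" and X: "subspace X" and "finite F" and f: "\<And>j. j \<in> F \<Longrightarrow> f j \<in> X"
  shows "P (\<Sum>j\<in>F. c j *\<^sub>R f j) = (\<Sum>j\<in>F. c j *\<^sub>R P (f j))"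
  using \<open>finite F\<close> f
proof (induction F rule: finite_induct)
  case empty
  then show ?case using linear_on_0[OF P X] by simp
next
  case (insert a F)
  have "(\<Sum>j\<in>F. c j *\<^sub>R f j) \<in> X" "c a *\<^sub>R f a \<in> X"
    using insert.prems X by (auto intro!: subspace_sum subspace_scale)
  then show ?case
    using insert P unfolding linear_on_def by simp
qed

lemma indicator_in_linf_space: "j < n \<Longrightarrow> (indicator {j} :: nat \<Rightarrow> real) \<in> linf_space n"
  unfolding linf_space_def by simp

lemma linf_space_expansion:
  assumes "v \<in> linf_space n"
  shows "v = (\<Sum>j<n. v j *\<^sub>R indicator {j})"
proof
  fix i
  have "(\<Sum>j<n. (v j *\<^sub>R indicator {j}) i) = (\<Sum>j<n. if j = i then v i else 0)"
    by (rule sum.cong) (auto simp: indicator_def)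
  then show "v i = (\<Sum>j<n. v j *\<^sub>R indicator {j}) i"
    using assms unfolding linf_space_def sum_fun_apply by (auto simp: not_less)
qed

lemma linear_on_linf_expansion:
  assumes "linear_on (linf_space n) P" "v \<in> linf_space n"
  shows "P v = (\<Sum>j<n. v j *\<^sub>R P (indicator {j}))"
proof -
  have "P v = P (\<Sum>j<n. v j *\<^sub>R indicator {j})"
    by (rule arg_cong[OF linf_space_expansion[OF assms(2)]])
  also have "\<dots> = (\<Sum>j<n. v j *\<^sub>R P (indicator {j}))"
    by (rule linear_on_sum[OF assms(1) subspace_linf_space]) (auto intro: indicator_in_linf_space)
  finally show ?thesis .
qed

lemma span_biorthogonal_expansion:
  fixes y :: "nat \<Rightarrow> 'i \<Rightarrow> real" and K :: "nat \<Rightarrow> 'i"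
  assumes bi: "\<And>k k'. k < m \<Longrightarrow> k' < m \<Longrightarrow> y k (K k') = (if k = k' then 1 else 0)"
    and "v \<in> span (y ` {..<m})"
  shows "v = (\<Sum>k<m. v (K k) *\<^sub>R y k)"
  using assms(2)
proof (induction rule: span_induct_alt)
  case base
  then show ?case by simp
next
  case (step c x v)
  then obtain k0 where k0: "k0 < m" "x = y k0" by blast
  have "(\<Sum>k<m. x (K k) *\<^sub>R y k) = (\<Sum>k<m. if k0 = k then y k else 0)"
    using k0 bi by (intro sum.cong) auto
  also have "\<dots> = x" using k0 by simp
  finally have x: "(\<Sum>k<m. x (K k) *\<^sub>R y k) = x" .
  have "(\<Sum>k<m. (c *\<^sub>R x + v) (K k) *\<^sub>R y k) =
      c *\<^sub>R (\<Sum>k<m. x (K k) *\<^sub>R y k) + (\<Sum>k<m. v (K k) *\<^sub>R y k)"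
    by (simp add: scaleR_add_left sum.distrib scaleR_sum_right)
  also have "\<dots> = c *\<^sub>R x + v" by (simp only: x step.IH[symmetric])
  finally show ?case by (rule sym)
qed

lemma independent_biorthogonal:
  fixes y :: "nat \<Rightarrow> 'i \<Rightarrow> real" and K :: "nat \<Rightarrow> 'i"
  assumes bi: "\<And>k k'. k < m \<Longrightarrow> k' < m \<Longrightarrow> y k (K k') = (if k = k' then 1 else 0)"
  shows "inj_on y {..<m}" "independent (y ` {..<m})"
proof -
  show "inj_on y {..<m}"
    using bi by (intro inj_onI) (metis lessThan_iff zero_neq_one)
  have vanish: "w (K k0) = 0" if "w \<in> span (y ` ({..<m} - {k0}))" "k0 < m" for w k0
    using that(1) by (induction rule: span_induct_alt) (auto simp: bi that(2))
  show "independent (y ` {..<m})"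
    unfolding dependent_def
  proof
    assume "\<exists>a\<in>y ` {..<m}. a \<in> span (y ` {..<m} - {a})"
    then obtain k0 where "k0 < m" "y k0 \<in> span (y ` {..<m} - {y k0})" by blast
    moreover have "y ` {..<m} - {y k0} \<subseteq> y ` ({..<m} - {k0})" by blast
    ultimately have "y k0 (K k0) = 0" using vanish span_mono by blast
    then show False using bi \<open>k0 < m\<close> by simp
  qed
qed

lemma dim_span_biorthogonal:
  fixes y :: "nat \<Rightarrow> 'i \<Rightarrow> real" and K :: "nat \<Rightarrow> 'i"
  assumes "\<And>k k'. k < m \<Longrightarrow> k' < m \<Longrightarrow> y k (K k') = (if k = k' then 1 else 0)"
  shows "dim (span (y ` {..<m})) = m"
proof -
  have inj: "inj_on y {..<m}" using assms by (rule independent_biorthogonal(1))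
  have "independent (y ` {..<m})" using assms by (rule independent_biorthogonal(2))
  then have "dim (span (y ` {..<m})) = card (y ` {..<m})" by (rule dim_span_eq_card_independent)
  also have "\<dots> = m" using card_image[OF inj] by simp
  finally show ?thesis .
qed

lemma linf_space_subspace_of_dim:
  assumes "m \<le> n"
  shows "\<exists>Y. subspace Y \<and> Y \<subseteq> linf_space n \<and> dim Y = m"
proof (intro exI conjI)
  let ?Y = "span ((\<lambda>k. indicator {k} :: nat \<Rightarrow> real) ` {..<m})"
  show "subspace ?Y" by simp
  show "?Y \<subseteq> linf_space n"
    using assms indicator_in_linf_space by (intro span_minimal subspace_linf_space) auto
  show "dim ?Y = m"
    by (rule dim_span_biorthogonal[where K = id]) auto
qed

lemma rel_proj_const_le_lambda_mn:
  assumes "subspace Y" "Y \<subseteq> linf_space n" "dim Y = m" "0 < m"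
  shows "rel_proj_const (linf_norm n) (linf_space n) Y \<le> lambda_mn m n"
  unfolding lambda_mn_def
proof (rule cSup_upper)
  show "rel_proj_const (linf_norm n) (linf_space n) Y \<in> {rel_proj_const (linf_norm n) (linf_space n) Y | Y.
       subspace Y \<and> Y \<subseteq> linf_space n \<and> dim Y = m}" using assms(1-3) by blast
  show "bdd_above {rel_proj_const (linf_norm n) (linf_space n) Y | Y.
       subspace Y \<and> Y \<subseteq> linf_space n \<and> dim Y = m}"
    using rel_proj_const_le_dim[OF is_norm_on_linf] assms(4)
    by (intro bdd_aboveI[of _ "2 ^ m - 1"]) fastforce
qed

lemma lambda_mn_le_lambda_abs:
  assumes "0 < m" "m \<le> n"
  shows "lambda_mn m n \<le> lambda_abs m"
  unfolding lambda_mn_def lambda_abs_def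
proof (rule cSup_mono)
  show "{rel_proj_const (linf_norm n) (linf_space n) Y | Y. subspace Y \<and> Y \<subseteq> linf_space n \<and> dim Y = m} \<noteq> {}"
    using linf_space_subspace_of_dim[OF assms(2)] by blast
  show "bdd_above {rel_proj_const N X Y | N X (Y :: (real \<Rightarrow> real) set).
       is_banach_on N X \<and> subspace Y \<and> Y \<subseteq> X \<and> dim Y = m}"
    using bdd_above_lambda_abs_set[OF assms(1)] .
  fix r assume "r \<in> {rel_proj_const (linf_norm n) (linf_space n) Y | Y.
      subspace Y \<and> Y \<subseteq> linf_space n \<and> dim Y = m}"
  then obtain Y where Y: "subspace Y" "Y \<subseteq> linf_space n" "dim Y = m"
    and r: "r = rel_proj_const (linf_norm n) (linf_space n) Y" by blast
  have "r \<le> rel_proj_const (\<lambda>g. linf_norm n (sample_nat g)) (step_fun ` linf_space n) (step_fun ` Y)"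
    unfolding r using Y assms(1)
    by (intro step_fun.rel_proj_const_le_image is_norm_on_linf) auto
  moreover have "is_banach_on (\<lambda>g. linf_norm n (sample_nat g)) (step_fun ` linf_space n)"
    by (rule step_fun.is_banach_on_image[OF is_banach_on_linf])
  moreover have "subspace (step_fun ` Y)" "step_fun ` Y \<subseteq> step_fun ` linf_space n"
    "dim (step_fun ` Y) = m"
    using Y step_fun.dim_image linear_subspace_image[OF step_fun.linear_embed Y(1)] by auto
  ultimately show "\<exists>a\<in>{rel_proj_const N X Y | N X (Y :: (real \<Rightarrow> real) set).
       is_banach_on N X \<and> subspace Y \<and> Y \<subseteq> X \<and> dim Y = m}. r \<le> a" by blast
qed

section \<open>Lower bounds from weighted sign matrices\<close>

lemma linf_proj_trace_biorthogonal:
  fixes y :: "nat \<Rightarrow> nat \<Rightarrow> real"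
  assumes P: "is_bounded_proj (linf_norm n) (linf_space n) (span (y ` {..<m})) P"
    and bi: "\<And>k k'. k < m \<Longrightarrow> k' < m \<Longrightarrow> y k (K k') = (if k = k' then 1 else 0)"
    and y: "\<And>k. k < m \<Longrightarrow> y k \<in> linf_space n"
  shows "(\<Sum>j<n. P (indicator {j}) j) = m"
proof -
  have lin: "linear_on (linf_space n) P" using is_bounded_proj_linear_on[OF P] .
  have "P (indicator {j}) j = (\<Sum>k<m. P (indicator {j}) (K k) * y k j)" if "j < n" for j
  proof -
    have "P (indicator {j}) = (\<Sum>k<m. P (indicator {j}) (K k) *\<^sub>R y k)"
      using bi is_bounded_proj_range[OF P indicator_in_linf_space[OF that]]
      by (rule span_biorthogonal_expansion)
    from arg_cong[where f = "\<lambda>v. v j", OF this] show ?thesis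
      unfolding sum_fun_apply scaleR_fun_apply real_scaleR_def .
  qed
  then have "(\<Sum>j<n. P (indicator {j}) j) = (\<Sum>j<n. \<Sum>k<m. P (indicator {j}) (K k) * y k j)"
    by simp
  also have "\<dots> = (\<Sum>k<m. \<Sum>j<n. y k j * P (indicator {j}) (K k))"
    by (subst sum.swap) (simp add: mult.commute)
  also have "\<dots> = (\<Sum>k<m. P (y k) (K k))"
    using linear_on_linf_expansion[OF lin y] by (simp add: sum_fun_apply)
  also have "\<dots> = (\<Sum>k<m. y k (K k))"
    using is_bounded_proj_id[OF P] by (simp add: span_base)
  also have "\<dots> = m" using bi by simp
  finally show ?thesis .
qed

lemma linf_proj_norm_lower_bound:
  fixes S :: "nat \<Rightarrow> nat \<Rightarrow> real"
  assumes P: "is_bounded_proj (linf_norm n) (linf_space n) Y P"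
    and S: "\<And>i j. i < n \<Longrightarrow> j < n \<Longrightarrow> S i j = S j i" "\<And>i j. i < n \<Longrightarrow> j < n \<Longrightarrow> \<bar>S i j\<bar> \<le> 1"
    and w: "\<And>i. i < n \<Longrightarrow> 0 \<le> w i"
    and eigen: "\<And>v j. v \<in> Y \<Longrightarrow> j < n \<Longrightarrow> (\<Sum>i<n. S j i * w i * v i) = \<mu> * v j"
  shows "\<mu> * (\<Sum>j<n. P (indicator {j}) j) \<le> (\<Sum>i<n. w i) * op_norm_on (linf_norm n) (linf_space n) P"
proof -
  define s where "s i = (\<lambda>j. if j < n then S i j else 0)" for i
  have s: "s i \<in> linf_space n" "i < n \<Longrightarrow> linf_norm n (s i) \<le> 1" for i
    using S(2) unfolding s_def linf_space_def linf_norm_le_iff by auto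
  have lin: "linear_on (linf_space n) P" using is_bounded_proj_linear_on[OF P] .
  have PeY: "P (indicator {j}) \<in> Y" if "j < n" for j
    using is_bounded_proj_range[OF P indicator_in_linf_space[OF that]] .
  have "(\<Sum>i<n. w i * P (s i) i) = (\<Sum>i<n. \<Sum>j<n. w i * S i j * P (indicator {j}) i)"
    using linear_on_linf_expansion[OF lin s(1)]
    by (simp add: sum_fun_apply sum_distrib_left s_def mult.assoc)
  also have "\<dots> = (\<Sum>j<n. \<Sum>i<n. S j i * w i * P (indicator {j}) i)"
    by (subst sum.swap) (intro sum.cong refl, simp add: S(1))
  also have "\<dots> = \<mu> * (\<Sum>j<n. P (indicator {j}) j)"
    using eigen PeY by (simp add: sum_distrib_left)
  finally have trace: "(\<Sum>i<n. w i * P (s i) i) = \<mu> * (\<Sum>j<n. P (indicator {j}) j)" .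
  have "P (s i) i \<le> op_norm_on (linf_norm n) (linf_space n) P" if "i < n" for i
  proof -
    have "P (s i) i \<le> linf_norm n (P (s i))"
      using abs_le_linf_norm[OF that] by (rule order_trans[OF abs_ge_self])
    also have "\<dots> \<le> op_norm_on (linf_norm n) (linf_space n) P"
      using s(1) s(2)[OF that] by (rule op_norm_on_upper[OF is_norm_on_linf P])
    finally show ?thesis .
  qed
  then have "(\<Sum>i<n. w i * P (s i) i) \<le> (\<Sum>i<n. w i * op_norm_on (linf_norm n) (linf_space n) P)"
    using w by (intro sum_mono mult_left_mono) auto
  then show ?thesis using trace by (simp add: sum_distrib_right)
qed

section \<open>A five-dimensional subspace of \<open>\<ell>\<^sub>\<infinity>\<^sup>1\<^sup>6\<close>\<close>

definition sign_matrix16 :: "int list list" where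
  "sign_matrix16 = [[1, -1, -1, -1, -1, -1, 1, 1, 1, 1, 1, 1, 1, 1, 1, 1], [-1, 1, -1, -1, -1, -1, 1, 1, 1, 1, -1, -1, -1, -1, -1, -1], [-1, -1, 1, -1, -1, -1, 1, -1, -1, -1, 1, 1, 1, -1, -1, -1], [-1, -1, -1, 1, -1, -1, -1, 1, -1, -1, 1, -1, -1, 1, 1, -1], [-1, -1, -1, -1, 1, -1, -1, -1, 1, -1, -1, 1, -1, 1, -1, 1], [-1, -1, -1, -1, -1, 1, -1, -1, -1, 1, -1, -1, 1, -1, 1, 1], [1, 1, 1, -1, -1, -1, 1, 1, 1, 1, 1, 1, 1, -1, -1, -1], [1, 1, -1, 1, -1, -1, 1, 1, 1, 1, 1, -1, -1, 1, 1, -1], [1, 1, -1, -1, 1, -1, 1, 1, 1, 1, -1, 1, -1, 1, -1, 1], [1, 1, -1, -1, -1, 1, 1, 1, 1, 1, -1, -1, 1, -1, 1, 1], [1, -1, 1, 1, -1, -1, 1, 1, -1, -1, 1, 1, 1, 1, 1, -1], [1, -1, 1, -1, 1, -1, 1, -1, 1, -1, 1, 1, 1, 1, -1, 1], [1, -1, 1, -1, -1, 1, 1, -1, -1, 1, 1, 1, 1, -1, 1, 1], [1, -1, -1, 1, 1, -1, -1, 1, 1, -1, 1, 1, -1, 1, 1, 1], [1, -1, -1, 1, -1, 1, -1, 1, -1, 1, 1, -1, 1, 1, 1, 1], [1, -1, -1, -1, 1, 1, -1, -1, 1, 1, -1, 1, 1, 1, 1, 1]]"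

definition eigvec_rat :: "int list list" where
  "eigvec_rat = [[0, 0, 0, 0, 0, 0, 5, 5, 5, 5, 0, 0, 0, 0, 0, 0], [0, 0, 0, 0, 0, 0, 5, 0, 0, 0, 5, 5, 5, 0, 0, 0], [0, 0, 0, 0, 0, 0, 5, 5, 5, 0, 5, 5, 0, 5, 0, 0], [0, 0, 0, 0, 0, 0, -5, 0, -5, 0, 0, -5, 0, 0, 5, 0], [0, 0, 0, 0, 0, 0, -5, -5, 0, 0, -5, 0, 0, 0, 0, 5]]"

definition eigvec_irr :: "int list list" where
  "eigvec_irr = [[2, 2, -1, -1, -1, -1, 0, 0, 0, 0, 0, 0, 0, 0, 0, 0], [2, -1, 2, -1, -1, -1, 0, 0, 0, 0, 0, 0, 0, 0, 0, 0], [3, 0, 0, 0, 0, -3, 0, 0, 0, 0, 0, 0, 0, 0, 0, 0], [-1, -1, -1, 2, -1, 2, 0, 0, 0, 0, 0, 0, 0, 0, 0, 0], [-1, -1, -1, -1, 2, 2, 0, 0, 0, 0, 0, 0, 0, 0, 0, 0]]"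

definition interp_index :: "nat list" where "interp_index = [9, 12, 13, 14, 15]"

definition sign16 :: "nat \<Rightarrow> nat \<Rightarrow> int" where "sign16 i j = sign_matrix16 ! i ! j"
definition eig_a :: "nat \<Rightarrow> nat \<Rightarrow> int" where "eig_a k i = eigvec_rat ! k ! i"
definition eig_b :: "nat \<Rightarrow> nat \<Rightarrow> int" where "eig_b k i = eigvec_irr ! k ! i"
definition heavy :: "nat \<Rightarrow> int" where "heavy i = (if i < 6 then 0 else 1)"

definition weight16 :: "nat \<Rightarrow> real" where "weight16 i = 5 + sqrt 5 * of_int (heavy i)"

definition eigvec :: "nat \<Rightarrow> nat \<Rightarrow> real" where
  "eigvec k i = (if i < 16 then (of_int (eig_a k i) + sqrt 5 * of_int (eig_b k i)) / 5 else 0)"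

definition Y5 :: "(nat \<Rightarrow> real) set" where "Y5 = span (eigvec ` {..<5})"

lemma sign16_symmetric_check:
  "\<forall>i<16. \<forall>j<16. sign16 i j = sign16 j i \<and> \<bar>sign16 i j\<bar> = 1"
  unfolding sign16_def sign_matrix16_def by code_simp

text \<open>The vectors \<open>eigvec k\<close> have entries in \<open>\<int>[\<surd>5] / 5\<close>, so their eigen-equation is
  checked on integers, separately for the rational and the \<open>\<surd>5\<close> parts.\<close>
lemma eigen_check:
  "\<forall>k<5. \<forall>j<16.
     (\<Sum>i<16. sign16 j i * (5 * eig_a k i + 5 * heavy i * eig_b k i)) = 20 * eig_a k j + 50 * eig_b k j \<and>
     (\<Sum>i<16. sign16 j i * (5 * eig_b k i + heavy i * eig_a k i)) = 20 * eig_b k j + 10 * eig_a k j"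
  unfolding sign16_def eig_a_def eig_b_def heavy_def sign_matrix16_def eigvec_rat_def eigvec_irr_def
  by code_simp

lemma interp_check:
  "\<forall>k<5. \<forall>k'<5. eig_a k (interp_index ! k') = (if k = k' then 5 else 0) \<and>
     eig_b k (interp_index ! k') = 0 \<and> interp_index ! k' < 16"
  unfolding eig_a_def eig_b_def eigvec_rat_def eigvec_irr_def interp_index_def by code_simp

lemma heavy_sum_check: "(\<Sum>i<16. heavy i) = 10"
  unfolding heavy_def by code_simp

lemma sqrt5_times_sqrt5: "sqrt 5 * (sqrt 5 * x) = 5 * (x :: real)"
  by (simp add: mult.assoc[symmetric])

lemma mult_sqrt5:
  fixes x y u v :: real
  shows "(x + sqrt 5 * y) * (u + sqrt 5 * v) = (x * u + 5 * y * v) + sqrt 5 * (x * v + y * u)"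
proof -
  have "(x + sqrt 5 * y) * (u + sqrt 5 * v) = x * u + (sqrt 5 * sqrt 5) * y * v + sqrt 5 * (x * v + y * u)"
    by (simp add: algebra_simps)
  then show ?thesis by simp
qed

lemma eigvec_in_linf_space: "eigvec k \<in> linf_space 16"
  unfolding eigvec_def linf_space_def by simp

lemma eigvec_biorthogonal:
  "k < 5 \<Longrightarrow> k' < 5 \<Longrightarrow> eigvec k (interp_index ! k') = (if k = k' then 1 else 0)"
  using interp_check unfolding eigvec_def by auto

lemma sqrt5_weighted_product:
  fixes s h a b :: real
  shows "s * (5 + sqrt 5 * h) * ((a + sqrt 5 * b) / 5) =
    (s * (5 * a + 5 * h * b) + sqrt 5 * (s * (5 * b + h * a))) / 5"
proof -
  have "s * (5 + sqrt 5 * h) * ((a + sqrt 5 * b) / 5) = s * ((5 + sqrt 5 * h) * (a + sqrt 5 * b)) / 5"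
    by simp
  also have "\<dots> = s * ((5 * a + 5 * h * b) + sqrt 5 * (5 * b + h * a)) / 5"
    by (simp only: mult_sqrt5)
  finally show ?thesis by (simp add: algebra_simps)
qed

lemma eigvec_eigen:
  assumes k: "k < 5" and j: "j < 16"
  shows "(\<Sum>i<16. of_int (sign16 j i) * weight16 i * eigvec k i) = (20 + 10 * sqrt 5) * eigvec k j"
proof -
  define X where "X i = sign16 j i * (5 * eig_a k i + 5 * heavy i * eig_b k i)" for i
  define Y where "Y i = sign16 j i * (5 * eig_b k i + heavy i * eig_a k i)" for i
  have "of_int (sign16 j i) * weight16 i * eigvec k i = (of_int (X i) + sqrt 5 * of_int (Y i)) / 5"
    if "i < 16" for i
    using that sqrt5_weighted_product[of "of_int (sign16 j i)" "of_int (heavy i)" "of_int (eig_a k i)"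
        "of_int (eig_b k i)"]
    unfolding weight16_def eigvec_def X_def Y_def by simp
  then have "(\<Sum>i<16. of_int (sign16 j i) * weight16 i * eigvec k i) =
      (\<Sum>i<16. (of_int (X i) + sqrt 5 * of_int (Y i)) / 5)"
    by (intro sum.cong) auto
  also have "\<dots> = (of_int (\<Sum>i<16. X i) + sqrt 5 * of_int (\<Sum>i<16. Y i)) / 5"
    by (simp add: sum_divide_distrib sum.distrib sum_distrib_left add_divide_distrib)
  also have "\<dots> = (of_int (20 * eig_a k j + 50 * eig_b k j) + sqrt 5 * of_int (20 * eig_b k j + 10 * eig_a k j)) / 5"
    using eigen_check k j unfolding X_def Y_def by simp
  also have "\<dots> = (20 + sqrt 5 * 10) * ((of_int (eig_a k j) + sqrt 5 * of_int (eig_b k j)) / 5)"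
    by (simp add: mult_sqrt5 algebra_simps)
  finally show ?thesis using j unfolding eigvec_def by (simp add: mult.commute)
qed

lemma Y5_eigen:
  assumes "v \<in> Y5" "j < 16"
  shows "(\<Sum>i<16. of_int (sign16 j i) * weight16 i * v i) = (20 + 10 * sqrt 5) * v j"
  using assms(1) unfolding Y5_def
proof (induction rule: span_induct_alt)
  case (step c x v)
  then obtain k where k: "k < 5" "x = eigvec k" by blast
  have "(\<Sum>i<16. of_int (sign16 j i) * weight16 i * (c *\<^sub>R x + v) i) =
      c * (\<Sum>i<16. of_int (sign16 j i) * weight16 i * x i) + (\<Sum>i<16. of_int (sign16 j i) * weight16 i * v i)"
    by (simp add: algebra_simps sum.distrib sum_distrib_left)
  also have "\<dots> = (20 + 10 * sqrt 5) * (c *\<^sub>R x + v) j"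
    using eigvec_eigen[OF k(1) assms(2)] step.IH k(2) by (simp add: algebra_simps)
  finally show ?case .
qed simp

lemma Y5_subspace: "subspace Y5"
  unfolding Y5_def by simp

lemma Y5_subset_linf_space: "Y5 \<subseteq> linf_space 16"
  unfolding Y5_def using eigvec_in_linf_space by (intro span_minimal subspace_linf_space) auto

lemma dim_Y5: "dim Y5 = 5"
  unfolding Y5_def using eigvec_biorthogonal by (rule dim_span_biorthogonal)

lemma weight16_sum: "(\<Sum>i<16. weight16 i) = 80 + 10 * sqrt 5"
proof -
  have "(\<Sum>i<16. weight16 i) = 80 + sqrt 5 * of_int (\<Sum>i<16. heavy i)"
    unfolding weight16_def by (simp add: sum.distrib sum_distrib_left)
  then show ?thesis using heavy_sum_check by simp
qed

lemma rel_proj_const_Y5: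
  "5 / 59 * (11 + 6 * sqrt 5) \<le> rel_proj_const (linf_norm 16) (linf_space 16) Y5"
proof -
  obtain P0 where "proj_bounded_by (linf_norm 16) (linf_space 16) Y5 P0 (2 ^ dim Y5 - 1)"
    using proj_onto_finite_dim_exists[OF is_norm_on_linf Y5_subspace Y5_subset_linf_space] dim_Y5
    by auto
  then show ?thesis
  proof (intro rel_proj_const_ge proj_bounded_by_is_bounded_proj)
    fix P assume P: "is_bounded_proj (linf_norm 16) (linf_space 16) Y5 P"
    have "(20 + 10 * sqrt 5) * (\<Sum>j<16. P (indicator {j}) j)
        \<le> (\<Sum>i<16. weight16 i) * op_norm_on (linf_norm 16) (linf_space 16) P"
    proof (rule linf_proj_norm_lower_bound[where S = "\<lambda>i j. of_int (sign16 i j)", OF P])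
      show "0 \<le> weight16 i" for i by (simp add: weight16_def heavy_def)
    qed (use sign16_symmetric_check Y5_eigen in \<open>auto simp flip: of_int_abs\<close>)
    moreover have "(\<Sum>j<16. P (indicator {j}) j) = real 5"
      using P eigvec_biorthogonal eigvec_in_linf_space unfolding Y5_def
      by (intro linf_proj_trace_biorthogonal[where K = "\<lambda>k. interp_index ! k"]) auto
    moreover have "5 * (20 + 10 * sqrt 5) = (80 + 10 * sqrt 5) * (5 / 59 * (11 + 6 * sqrt (5::real)))"
      by (simp add: field_simps sqrt5_times_sqrt5)
    ultimately have "(80 + 10 * sqrt 5) * (5 / 59 * (11 + 6 * sqrt 5))
        \<le> (80 + 10 * sqrt 5) * op_norm_on (linf_norm 16) (linf_space 16) P"
      using weight16_sum by (simp add: mult.commute)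
    then show "5 / 59 * (11 + 6 * sqrt 5) \<le> op_norm_on (linf_norm 16) (linf_space 16) P"
      by (rule mult_left_le_imp_le) (simp add: add_pos_nonneg)
  qed
qed

theorem theorem5:
  shows "lambda_abs 5 \<ge> lambda_mn 5 16 \<and>
         lambda_mn 5 16 \<ge> 5 / 59 * (11 + 6 * sqrt 5)"
proof
  show "lambda_mn 5 16 \<le> lambda_abs 5"
    by (rule lambda_mn_le_lambda_abs) simp_all
  have "rel_proj_const (linf_norm 16) (linf_space 16) Y5 \<le> lambda_mn 5 16"
    by (rule rel_proj_const_le_lambda_mn[OF Y5_subspace Y5_subset_linf_space dim_Y5]) simp
  then show "5 / 59 * (11 + 6 * sqrt 5) \<le> lambda_mn 5 16"
    using rel_proj_const_Y5 by linarith
qed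

end
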